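(* Let $m,n,p,q\in\mathbb{R}$ with $m<0$, and let $P(t)=t^5+mt^3+nt^2+pt+q$. Set $u=\frac{2\sqrt{-m}}{\sqrt5}$, $\alpha=\frac{16n}{u^3}$, $\beta=\frac{16p}{u^4}-5$, $\gamma=\frac{16q}{u^5}$, and $f(\theta)=\alpha\cos^2\theta+\beta\cos\theta+\cos 5\theta+\gamma$. Let $N_{\mathrm{int}}$ be the number of zeros of $f$ in $[0,\pi]$ and $N_{\mathrm{ext}}$ the number of real roots of $P$ outside $[-u,u]$. Then $P(t)=0$ has exactly one real root (and two conjugate pairs of nonreal complex roots) if and only if $N_{\mathrm{int}}+N_{\mathrm{ext}}=1$. In this case one of the following holds: (a) $f$ has exactly one zero in $[0,\pi]$ and $N_{\mathrm{ext}}=0$, and the unique real root lies in $[-u,u]$; (b) $f$ has no zeros in $[0,\pi]$ and $f(\pi)>0$, and the unique real root lies in $(-\infty,-u)$; (c) $f$ has no zeros in $[0,\pi]$ and $f(0)<0$, and the unique real root lies in $(u,\infty)$.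
   Context: Note $f(0)=\alpha+\beta+1+\gamma$ and $f(\pi)=\alpha-\beta-1+\gamma$. *)

theory Defs
  imports Complex_Main
begin

end

theory Submission
  imports Defs "HOL-Computational_Algebra.Polynomial" "HOL-Real_Asymp.Real_Asymp"
begin

text \<open>Since \<open>m = -5 u\<^sup>2/4\<close>, substituting \<open>t = u cos \<theta>\<close> and using
  \<open>cos 5\<theta> = 16 cos\<^sup>5\<theta> - 20 cos\<^sup>3\<theta> + 5 cos \<theta>\<close> gives \<open>P (u cos \<theta>) = u\<^sup>5 f \<theta> / 16\<close>. As
  \<open>\<theta> \<mapsto> u cos \<theta>\<close> maps \<open>[0, \<pi>]\<close> bijectively onto \<open>[-u, u]\<close>, \<open>N_int\<close> counts the real
  roots of \<open>P\<close> in \<open>[-u, u]\<close>, so \<open>N_int + N_ext\<close> is the number of real roots. If the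
  only root lies left of \<open>-u\<close>, then \<open>P\<close>, being positive near \<open>+\<infinity>\<close>, is positive on
  \<open>[-u, \<infinity>)\<close> by the intermediate value theorem, whence \<open>f \<pi> > 0\<close>; symmetrically
  \<open>f 0 < 0\<close> if the only root lies right of \<open>u\<close>.\<close>

lemma cos_quintuple_cos:
  fixes x :: real
  shows "cos (5 * x) = 16 * cos x ^ 5 - 20 * cos x ^ 3 + 5 * cos x"
proof -
  have "cos (5 * x) = 2 * cos (3 * x) * cos (2 * x) - cos x"
    using cos_times_cos[of "3 * x" "2 * x"] by simp
  also have "\<dots> = 16 * cos x ^ 5 - 20 * cos x ^ 3 + 5 * cos x"
    unfolding cos_treble_cos cos_double_cos by (simp add: algebra_simps eval_nat_numeral)
  finally show ?thesis .
qed

lemma bij_betw_scaled_cos: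
  fixes u :: real
  assumes "u > 0"
  shows "bij_betw (\<lambda>\<theta>. u * cos \<theta>) {0..pi} {-u..u}"
proof (rule bij_betw_imageI)
  show "inj_on (\<lambda>\<theta>. u * cos \<theta>) {0..pi}"
    using assms cos_inj_pi by (auto simp: inj_on_def)
  show "(\<lambda>\<theta>. u * cos \<theta>) ` {0..pi} = {-u..u}"
  proof
    show "(\<lambda>\<theta>. u * cos \<theta>) ` {0..pi} \<subseteq> {-u..u}"
      using assms mult_left_mono[of "-1" "cos _" u] mult_left_mono[of "cos _" 1 u] by auto
    show "{-u..u} \<subseteq> (\<lambda>\<theta>. u * cos \<theta>) ` {0..pi}"
    proof
      fix t :: real
      assume "t \<in> {-u..u}"
      then have "-1 \<le> t / u" "t / u \<le> 1"
        using assms by (auto simp: field_simps)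
      then have "t = u * cos (arccos (t / u))" "arccos (t / u) \<in> {0..pi}"
        using assms arccos_lbound arccos_ubound by auto
      then show "t \<in> (\<lambda>\<theta>. u * cos \<theta>) ` {0..pi}" by blast
    qed
  qed
qed

lemma card_zeros_scaled_cos:
  fixes u :: real and g :: "real \<Rightarrow> real"
  assumes "u > 0"
  shows "card {\<theta> \<in> {0..pi}. g (u * cos \<theta>) = 0} = card {t \<in> {-u..u}. g t = 0}"
  using bij_betw_Collect[OF bij_betw_scaled_cos[OF assms]] by (rule bij_betw_same_card) simp

lemma pos_right_of_zeros:
  fixes g :: "real \<Rightarrow> real"
  assumes "\<And>x. isCont g x" and "eventually (\<lambda>t. g t > 0) at_top" and "\<And>t. g t = 0 \<Longrightarrow> t < a"
  shows "g a > 0"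
proof (rule ccontr)
  assume "\<not> g a > 0"
  obtain N where "\<forall>t \<ge> N. g t > 0"
    using assms(2) by (auto simp: eventually_at_top_linorder)
  then obtain b where "b \<ge> a" "g b > 0"
    by (meson max.cobounded1 max.cobounded2)
  with \<open>\<not> g a > 0\<close> obtain x where "a \<le> x" "g x = 0"
    using IVT[of g a 0 b] assms(1) by force
  with assms(3) show False by force
qed

lemma neg_left_of_zeros:
  fixes g :: "real \<Rightarrow> real"
  assumes "\<And>x. isCont g x" and "eventually (\<lambda>t. g t < 0) at_bot" and "\<And>t. g t = 0 \<Longrightarrow> a < t"
  shows "g a < 0"
proof (rule ccontr)
  assume "\<not> g a < 0"
  obtain N where "\<forall>t \<le> N. g t < 0"
    using assms(2) by (auto simp: eventually_at_bot_linorder)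
  then obtain b where "b \<le> a" "g b < 0"
    by (meson min.cobounded1 min.cobounded2)
  with \<open>\<not> g a < 0\<close> obtain x where "x \<le> a" "g x = 0"
    using IVT[of g b 0 a] assms(1) by force
  with assms(3) show False by force
qed

lemma unique_zero_location:
  fixes g :: "real \<Rightarrow> real"
  assumes "\<And>x. isCont g x"
    and "eventually (\<lambda>t. g t > 0) at_top" and "eventually (\<lambda>t. g t < 0) at_bot"
    and "{t. g t = 0} = {r}"
  shows "r \<in> {-u..u} \<or> (r < -u \<and> g (-u) > 0) \<or> (r > u \<and> g u < 0)"
proof -
  have zero_iff: "g t = 0 \<longleftrightarrow> t = r" for t
    using assms(4) by blast
  consider "r \<in> {-u..u}" | "r < -u" | "r > u" by force
  then show ?thesis
  proof cases
    case 2
    then have "g (-u) > 0" using pos_right_of_zeros[OF assms(1,2)] zero_iff by force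
    with 2 show ?thesis by blast
  next
    case 3
    then have "g u < 0" using neg_left_of_zeros[OF assms(1,3)] zero_iff by force
    with 3 show ?thesis by blast
  qed simp
qed

lemma depressed_quintic_unique_zero_location:
  fixes m n p q r u :: real
  assumes "{t. t^5 + m * t^3 + n * t^2 + p * t + q = 0} = {r}"
  shows "r \<in> {-u..u}
    \<or> (r < -u \<and> (-u)^5 + m * (-u)^3 + n * (-u)^2 + p * (-u) + q > 0)
    \<or> (r > u \<and> u^5 + m * u^3 + n * u^2 + p * u + q < 0)"
proof (rule unique_zero_location[where g = "\<lambda>t. t^5 + m * t^3 + n * t^2 + p * t + q"])
  show "isCont (\<lambda>t. t^5 + m * t^3 + n * t^2 + p * t + q) x" for x
    by (intro continuous_intros)
  show "eventually (\<lambda>t. t^5 + m * t^3 + n * t^2 + p * t + q > 0) at_top"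
    and "eventually (\<lambda>t. t^5 + m * t^3 + n * t^2 + p * t + q < 0) at_bot"
    by real_asymp+
qed (use assms in simp)

lemma finite_zeros_depressed_quintic:
  fixes m n p q :: real
  shows "finite {t. t^5 + m * t^3 + n * t^2 + p * t + q = 0}"
proof -
  have "{t. t^5 + m * t^3 + n * t^2 + p * t + q = 0} = {t. poly [:q, p, n, m, 0, 1:] t = 0}"
    by (simp add: algebra_simps eval_nat_numeral)
  also have "finite \<dots>"
    by (rule poly_roots_finite) simp
  finally show ?thesis .
qed

lemma depressed_quintic_scaled_cos:
  fixes m n p q u \<theta> :: real
  assumes "u > 0" and "m = - 5 / 4 * u^2"
  shows "(u * cos \<theta>)^5 + m * (u * cos \<theta>)^3 + n * (u * cos \<theta>)^2 + p * (u * cos \<theta>) + q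
    = u^5 / 16 * (16 * n / u^3 * (cos \<theta>)^2 + (16 * p / u^4 - 5) * cos \<theta> + cos (5 * \<theta>) + 16 * q / u^5)"
  using assms(1) unfolding assms(2) cos_quintuple_cos by (simp add: field_simps eval_nat_numeral)

theorem theorem3:
  fixes m n p q u \<alpha> \<beta> \<gamma> :: real and P f :: "real \<Rightarrow> real" and N_int N_ext :: nat
  assumes hm: "m < 0"
    and hP: "P = (\<lambda>t. t^5 + m * t^3 + n * t^2 + p * t + q)"
    and hu: "u = 2 * sqrt (- m) / sqrt 5"
    and h\<alpha>: "\<alpha> = 16 * n / u^3"
    and h\<beta>: "\<beta> = 16 * p / u^4 - 5"
    and h\<gamma>: "\<gamma> = 16 * q / u^5"
    and hf: "f = (\<lambda>\<theta>. \<alpha> * (cos \<theta>)^2 + \<beta> * cos \<theta> + cos (5 * \<theta>) + \<gamma>)"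
    and hNint: "N_int = card {\<theta> \<in> {0..pi}. f \<theta> = 0}"
    and hNext: "N_ext = card {t. P t = 0 \<and> t \<notin> {-u..u}}"
  shows "(card {t. P t = 0} = 1 \<longleftrightarrow> N_int + N_ext = 1)
    \<and> (card {t. P t = 0} = 1 \<longrightarrow>
         (\<forall>r. P r = 0 \<longrightarrow>
            (N_int = 1 \<and> N_ext = 0 \<and> r \<in> {-u..u})
          \<or> (N_int = 0 \<and> f pi > 0 \<and> r \<in> {..<-u})
          \<or> (N_int = 0 \<and> f 0 < 0 \<and> r \<in> {u<..})))"
proof -
  define R where "R = {t. P t = 0}"
  define c where "c = u^5 / 16"
  have u_pos: "u > 0" and "m = - 5 / 4 * u^2"
    using hm by (simp_all add: hu power_divide)
  then have P_cos: "P (u * cos \<theta>) = c * f \<theta>" for \<theta>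
    unfolding hP hf h\<alpha> h\<beta> h\<gamma> c_def by (rule depressed_quintic_scaled_cos)
  have N_int: "N_int = card (R \<inter> {-u..u})"
    using card_zeros_scaled_cos[OF u_pos, of P] u_pos
    by (simp add: hNint R_def P_cos c_def Int_def conj_commute)
  have N_ext: "N_ext = card (R - {-u..u})"
    by (simp add: hNext R_def set_diff_eq)
  have "card R = N_int + N_ext"
    unfolding N_int N_ext
    by (rule card_Int_Diff) (simp add: R_def hP finite_zeros_depressed_quintic)
  moreover have "(N_int = 1 \<and> N_ext = 0 \<and> r \<in> {-u..u})
          \<or> (N_int = 0 \<and> f pi > 0 \<and> r \<in> {..<-u}) \<or> (N_int = 0 \<and> f 0 < 0 \<and> r \<in> {u<..})"
    if R: "R = {r}" for r
  proof -
    have "r \<in> {-u..u} \<or> (r < -u \<and> P (-u) > 0) \<or> (r > u \<and> P u < 0)"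
      using depressed_quintic_unique_zero_location R unfolding R_def hP .
    moreover have "c > 0" "P (-u) = c * f pi" "P u = c * f 0"
      using u_pos P_cos[of pi] P_cos[of 0] by (simp_all add: c_def)
    ultimately show ?thesis
      using R by (auto simp: N_int N_ext zero_less_mult_iff mult_less_0_iff)
  qed
  moreover have "R = {r}" if "card R = 1" and "P r = 0" for r
  proof -
    obtain x where "R = {x}"
      using \<open>card R = 1\<close> by (rule card_1_singletonE)
    with \<open>P r = 0\<close> show ?thesis by (auto simp: R_def)
  qed
  ultimately show ?thesis
    unfolding R_def [symmetric] by auto
qed

end
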